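(* Let $n,k$ be integers with $2\leq k\leq n-2$. The sparse paving positroids on ground set $[n]$ of rank $k$ are in bijection with the non-adjacent subsets of $[n]$, via the map sending the positroid with Grassmann necklace $(I_1,\dots,I_n)$ to $\{i\in[n]: I_i\neq C_{k,n}^{(i)}\}$.
   Context: A subset $A\subseteq[n]$ is non-adjacent if whenever $i\in A$ we have $i-1\notin A$ and $i+1\notin A$, considered modulo $n$ (so $1$ and $n$ are adjacent). For $t\in[n]$, the order $<_t$ on $[n]$ is $t <_t t+1 <_t \cdots <_t n <_t 1 <_t \cdots <_t t-1$. For $k$-subsets $I=\{a_1<_t\cdots<_t a_k\}$, $J=\{b_1<_t\cdots<_t b_k\}$ write $I\leq_t J$ if $a_i\leq_t b_i$ for all $i$. A positroid of rank $k$ on $[n]$ is a matroid whose bases are $\bigcap_{t=1}^n\{J\in\binom{[n]}{k}: I_t\leq_t J\}$ for some Grassmann necklace $(I_1,\dots,I_n)$, i.e. a sequence of $k$-subsets of $[n]$ with (indices mod $n$) $I_{i+1}=(I_i\setminus\{i\})\cup\{j\}$ for some $j$ if $i\in I_i$, and $I_{i+1}=I_i$ if $i\notin I_i$; then $I_t$ is the $\leq_t$-minimal basis. $C_{k,n}^{(i)}=\{i,i+1,\dots,i+k-1\}$ modulo $n$ with representatives in $[n]$. A rank-$k$ matroid is paving if every circuit has size at least $k$, and sparse paving if it and its dual are paving. *)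

theory Defs
  imports Main
begin

definition nxt :: "nat \<Rightarrow> nat \<Rightarrow> nat" where
  "nxt n i = (if i = n then 1 else i + 1)"

definition prv :: "nat \<Rightarrow> nat \<Rightarrow> nat" where
  "prv n i = (if i = 1 then n else i - 1)"

definition nonadjacent :: "nat \<Rightarrow> nat set \<Rightarrow> bool" where
  "nonadjacent n A \<longleftrightarrow> (\<forall>i\<in>A. nxt n i \<notin> A \<and> prv n i \<notin> A)"

text \<open>Position of a in the order <_t : t, t+1, ..., n, 1, ..., t-1 (positions 0..n-1).\<close>
definition tpos :: "nat \<Rightarrow> nat \<Rightarrow> nat \<Rightarrow> nat" where
  "tpos n t a = (a + n - t) mod n"

definition tsorted :: "nat \<Rightarrow> nat \<Rightarrow> nat set \<Rightarrow> nat list" where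
  "tsorted n t A = sort_key (tpos n t) (sorted_list_of_set A)"

definition gale_le :: "nat \<Rightarrow> nat \<Rightarrow> nat set \<Rightarrow> nat set \<Rightarrow> bool" where
  "gale_le n t I J \<longleftrightarrow> card I = card J \<and>
     (\<forall>i < card I. tpos n t (tsorted n t I ! i) \<le> tpos n t (tsorted n t J ! i))"

definition grassmann_necklace :: "nat \<Rightarrow> nat \<Rightarrow> (nat \<Rightarrow> nat set) \<Rightarrow> bool" where
  "grassmann_necklace n k I \<longleftrightarrow>
     (\<forall>i\<in>{1..n}. I i \<subseteq> {1..n} \<and> card (I i) = k) \<and>
     (\<forall>i\<in>{1..n}. (i \<in> I i \<longrightarrow> (\<exists>j. I (nxt n i) = (I i - {i}) \<union> {j})) \<and>
                  (i \<notin> I i \<longrightarrow> I (nxt n i) = I i))"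

definition matroid_bases :: "'a set \<Rightarrow> 'a set set \<Rightarrow> bool" where
  "matroid_bases E \<B> \<longleftrightarrow> \<B> \<noteq> {} \<and> (\<forall>B\<in>\<B>. B \<subseteq> E) \<and>
     (\<forall>B1\<in>\<B>. \<forall>B2\<in>\<B>. \<forall>x\<in>B1 - B2. \<exists>y\<in>B2 - B1. insert y (B1 - {x}) \<in> \<B>)"

definition indep :: "'a set set \<Rightarrow> 'a set \<Rightarrow> bool" where
  "indep \<B> X \<longleftrightarrow> (\<exists>B\<in>\<B>. X \<subseteq> B)"

definition circuit :: "'a set \<Rightarrow> 'a set set \<Rightarrow> 'a set \<Rightarrow> bool" where
  "circuit E \<B> C \<longleftrightarrow> C \<subseteq> E \<and> \<not> indep \<B> C \<and> (\<forall>D. D \<subset> C \<longrightarrow> indep \<B> D)"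

definition dual_bases :: "'a set \<Rightarrow> 'a set set \<Rightarrow> 'a set set" where
  "dual_bases E \<B> = (\<lambda>B. E - B) ` \<B>"

definition paving :: "'a set \<Rightarrow> nat \<Rightarrow> 'a set set \<Rightarrow> bool" where
  "paving E k \<B> \<longleftrightarrow> (\<forall>C. circuit E \<B> C \<longrightarrow> card C \<ge> k)"

definition sparse_paving :: "'a set \<Rightarrow> nat \<Rightarrow> 'a set set \<Rightarrow> bool" where
  "sparse_paving E k \<B> \<longleftrightarrow> paving E k \<B> \<and> paving E (card E - k) (dual_bases E \<B>)"

definition positroid :: "nat \<Rightarrow> nat \<Rightarrow> nat set set \<Rightarrow> bool" where
  "positroid n k \<B> \<longleftrightarrow> matroid_bases {1..n} \<B> \<and>
     (\<exists>I. grassmann_necklace n k I \<and>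
        \<B> = {J. J \<subseteq> {1..n} \<and> card J = k \<and> (\<forall>t\<in>{1..n}. gale_le n t (I t) J)})"

definition necklace_of :: "nat \<Rightarrow> nat set set \<Rightarrow> nat \<Rightarrow> nat set" where
  "necklace_of n \<B> t = (THE I. I \<in> \<B> \<and> (\<forall>J\<in>\<B>. gale_le n t I J))"

text \<open>C_{k,n}^{(i)} = {i, i+1, ..., i+k-1} mod n, representatives in [n].\<close>
definition cyc :: "nat \<Rightarrow> nat \<Rightarrow> nat \<Rightarrow> nat set" where
  "cyc k n i = {(i + j - 1) mod n + 1 | j. j < k}"

end

theory Submission
  imports Defs
begin

text \<open>A sparse paving matroid of rank \<open>k\<close> is the uniform matroid minus a family of \<open>k\<close>-sets no two of
  which share \<open>k - 1\<close> elements, and every such family arises. For a positroid every non-basis \<open>J\<close> is a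
  cyclic interval \<open>C^(t)\<close>: otherwise one exchange of elements yields a set that shares \<open>k - 1\<close>
  elements with \<open>J\<close> and is \<open>\<le>\<^sub>t\<close>-below \<open>J\<close>; sparse paving makes it a basis, and then so is \<open>J\<close>.
  Intervals starting at cyclically consecutive points share \<open>k - 1\<close> elements, while intervals starting
  further apart share at most \<open>k - 2\<close>, so the non-bases are the intervals starting in a nonadjacent
  set \<open>A\<close>. Conversely, for nonadjacent \<open>A\<close> the necklace whose \<open>i\<close>-th entry is \<open>C^(i)\<close> for
  \<open>i \<notin> A\<close> and \<open>C^(i)\<close> with its last element moved one step further for \<open>i \<in> A\<close> presents this
  matroid as a positroid, and its entries differ from \<open>C^(i)\<close> exactly at \<open>A\<close>.\<close>

section \<open>Cyclic orders and cyclic intervals\<close>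

text \<open>\<open>tnth n t p\<close> is the element at position \<open>p\<close> (counted from 0, modulo \<open>n\<close>) of \<open>[n]\<close>
  in the order \<open><\<^sub>t\<close>; it inverts \<open>tpos n t\<close>.\<close>

definition tnth :: "nat \<Rightarrow> nat \<Rightarrow> nat \<Rightarrow> nat" where
  "tnth n t p = (t - 1 + p) mod n + 1"

lemma tnth_in_range: "0 < n \<Longrightarrow> tnth n t p \<in> {1..n}"
  unfolding tnth_def by (auto simp: Suc_le_eq)

lemma tpos_less: "0 < n \<Longrightarrow> tpos n t a < n"
  unfolding tpos_def by simp

lemma tpos_tnth:
  assumes t: "t \<in> {1..n}" and p: "p < n"
  shows "tpos n t (tnth n t p) = p"
proof -
  have "tpos n t (tnth n t p) = ((t - 1 + p) mod n + (n + 1 - t)) mod n"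
    using t by (simp add: tpos_def tnth_def)
  also have "\<dots> = ((t - 1 + p) + (n + 1 - t)) mod n"
    by (simp add: mod_add_left_eq)
  also have "(t - 1 + p) + (n + 1 - t) = p + n"
    using t by auto
  finally show ?thesis
    using p by simp
qed

lemma tnth_tpos:
  assumes t: "t \<in> {1..n}" and a: "a \<in> {1..n}"
  shows "tnth n t (tpos n t a) = a"
proof -
  have "tnth n t (tpos n t a) = (t - 1 + (a + n - t)) mod n + 1"
    by (simp add: tpos_def tnth_def mod_add_right_eq)
  also have "t - 1 + (a + n - t) = (a - 1) + n"
    using t a by auto
  finally show ?thesis
    using a by auto
qed

lemma tnth_eq_iff: "tnth n t p = tnth n t q \<longleftrightarrow> p mod n = q mod n"
  unfolding tnth_def by (simp add: nat_mod_eq_iff)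

lemma tnth_0: "t \<in> {1..n} \<Longrightarrow> tnth n t 0 = t"
  unfolding tnth_def by auto

lemma inj_on_tpos: "t \<in> {1..n} \<Longrightarrow> inj_on (tpos n t) {1..n}"
  by (metis tnth_tpos inj_onI)

lemma card_tpos_image: "t \<in> {1..n} \<Longrightarrow> J \<subseteq> {1..n} \<Longrightarrow> card (tpos n t ` J) = card J"
  using inj_on_tpos by (metis card_image inj_on_subset)

lemma inj_on_tnth: "t \<in> {1..n} \<Longrightarrow> inj_on (tnth n t) {0..<n}"
  by (metis atLeastLessThan_iff inj_onI tpos_tnth)

lemma tpos_image_tnth: "t \<in> {1..n} \<Longrightarrow> S \<subseteq> {0..<n} \<Longrightarrow> tpos n t ` tnth n t ` S = S"
  by (auto simp: image_iff tpos_tnth subset_iff)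

lemma tnth_image_tpos: "t \<in> {1..n} \<Longrightarrow> J \<subseteq> {1..n} \<Longrightarrow> tnth n t ` tpos n t ` J = J"
  by (auto simp: image_iff subset_iff tnth_tpos)

lemma tnth_nxt:
  assumes t: "t \<in> {1..n}"
  shows "tnth n (nxt n t) p = tnth n t (Suc p)"
proof (cases "t = n")
  case True
  then have "t - 1 + Suc p = p + n"
    using t by auto
  then show ?thesis
    using True by (simp add: tnth_def nxt_def)
next
  case False
  then show ?thesis
    using t by (simp add: tnth_def nxt_def)
qed

lemma nxt_eq_tnth: "t \<in> {1..n} \<Longrightarrow> nxt n t = tnth n t 1"
  by (auto simp: tnth_def nxt_def)

lemma prv_eq_tnth:
  assumes t: "t \<in> {1..n}"
  shows "prv n t = tnth n t (n - 1)"
proof (cases "t = 1")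
  case True
  then show ?thesis
    using t by (simp add: tnth_def prv_def)
next
  case False
  have "tnth n t (n - 1) = (t - 1 + (n - 1)) mod n + 1"
    by (simp add: tnth_def)
  also have "t - 1 + (n - 1) = (t - 2) + n"
    using t False by auto
  also have "(t - 2 + n) mod n = t - 2"
    using t by auto
  finally show ?thesis
    using t False by (auto simp: prv_def)
qed

lemma tnth_shift:
  assumes a: "a \<in> {1..n}" and b: "b \<in> {1..n}"
  shows "tnth n b p = tnth n a (tpos n a b + p)"
proof -
  have "tnth n a (tpos n a b + p) = (a - 1 + ((b + n - a) mod n + p)) mod n + 1"
    by (simp add: tnth_def tpos_def)
  also have "\<dots> = (a - 1 + (b + n - a + p)) mod n + 1"
    by (metis mod_add_left_eq mod_add_right_eq)
  also have "a - 1 + (b + n - a + p) = (b - 1 + p) + n"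
    using a b by auto
  finally show ?thesis
    by (simp add: tnth_def)
qed

lemma cyc_eq_tnth_image: "1 \<le> t \<Longrightarrow> cyc k n t = tnth n t ` {0..<k}"
  unfolding cyc_def tnth_def by (auto simp: image_def)

lemma cyc_shift:
  assumes a: "a \<in> {1..n}" and b: "b \<in> {1..n}"
  shows "cyc k n b = tnth n a ` {tpos n a b..<tpos n a b + k}"
proof -
  have "cyc k n b = (\<lambda>p. tnth n a (tpos n a b + p)) ` {0..<k}"
    using cyc_eq_tnth_image[of b k n] tnth_shift[OF a b] b by simp
  also have "\<dots> = tnth n a ` plus (tpos n a b) ` {0..<k}"
    by (simp only: image_image)
  also have "\<dots> = tnth n a ` {tpos n a b..<tpos n a b + k}"
    by (simp add: add.commute)
  finally show ?thesis .
qed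

lemma cyc_subset: "t \<in> {1..n} \<Longrightarrow> cyc k n t \<subseteq> {1..n}"
  using cyc_eq_tnth_image[of t k n] tnth_in_range[of n t] by auto

lemma card_cyc: "t \<in> {1..n} \<Longrightarrow> k \<le> n \<Longrightarrow> card (cyc k n t) = k"
  using cyc_eq_tnth_image[of t k n] inj_on_tnth[of t n] by (simp add: card_image inj_on_subset)

lemma tpos_image_cyc: "t \<in> {1..n} \<Longrightarrow> k \<le> n \<Longrightarrow> tpos n t ` cyc k n t = {0..<k}"
  using cyc_eq_tnth_image[of t k n] tpos_image_tnth[of t n "{0..<k}"] by auto

lemma cyc_eq_iff_tpos_image:
  assumes t: "t \<in> {1..n}" and J: "J \<subseteq> {1..n}" and k: "k \<le> n"
  shows "J = cyc k n t \<longleftrightarrow> tpos n t ` J = {0..<k}"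
  using tpos_image_cyc[OF t k] tnth_image_tpos[OF t J] cyc_eq_tnth_image[of t k n] t by auto

lemma tnth_nxt_image:
  assumes t: "t \<in> {1..n}" and S: "S \<subseteq> {0..<n}" "0 \<in> S" and m: "m < n"
    and T: "Suc ` T = insert m (S - {0})"
  shows "tnth n (nxt n t) ` T = (tnth n t ` S - {t}) \<union> {tnth n t m}"
proof -
  have "tnth n (nxt n t) ` T = tnth n t ` Suc ` T"
    using tnth_nxt[OF t] by (auto simp: image_image)
  also have "\<dots> = insert (tnth n t m) (tnth n t ` (S - {0}))"
    using T by simp
  also have "tnth n t ` (S - {0}) = tnth n t ` S - tnth n t ` {0}"
    using S m by (intro inj_on_image_set_diff[OF inj_on_tnth[OF t]]) auto
  finally show ?thesis
    using tnth_0[OF t] by auto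
qed

section \<open>The Gale order\<close>

definition gale_nat :: "nat set \<Rightarrow> nat set \<Rightarrow> bool" where
  "gale_nat S T \<longleftrightarrow> card S = card T \<and>
     (\<forall>i < card S. sorted_list_of_set S ! i \<le> sorted_list_of_set T ! i)"

lemma map_tpos_tsorted:
  assumes t: "t \<in> {1..n}" and J: "J \<subseteq> {1..n}"
  shows "map (tpos n t) (tsorted n t J) = sorted_list_of_set (tpos n t ` J)"
proof -
  have fin: "finite J"
    using J finite_subset by blast
  have inj: "inj_on (tpos n t) J"
    using inj_on_tpos[OF t] J inj_on_subset by blast
  have "sorted_wrt (<) (map (tpos n t) (tsorted n t J))"
    unfolding strict_sorted_iff tsorted_def using fin inj by (auto simp: distinct_map)
  moreover have "set (map (tpos n t) (tsorted n t J)) = tpos n t ` J"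
    using fin by (simp add: tsorted_def)
  moreover have "length (map (tpos n t) (tsorted n t J)) = card (tpos n t ` J)"
    using fin inj by (simp add: tsorted_def card_image)
  ultimately have "sorted_list_of_set (tpos n t ` J) = map (tpos n t) (tsorted n t J)"
    using fin by (subst sorted_list_of_set_unique[symmetric]) auto
  then show ?thesis
    by simp
qed

lemma gale_le_iff_gale_nat:
  assumes t: "t \<in> {1..n}" and I: "I \<subseteq> {1..n}" and J: "J \<subseteq> {1..n}"
  shows "gale_le n t I J \<longleftrightarrow> gale_nat (tpos n t ` I) (tpos n t ` J)"
proof -
  have nth_tpos: "tpos n t (tsorted n t X ! i) = sorted_list_of_set (tpos n t ` X) ! i"
    if "X \<subseteq> {1..n}" "i < card X" for X i
    using map_tpos_tsorted[OF t that(1)] that finite_subset[OF that(1)]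
    by (metis length_map nth_map sorted_list_of_set.length_sorted_key_list_of_set card_tpos_image[OF t])
  show ?thesis
    unfolding gale_le_def gale_nat_def using I J card_tpos_image[OF t] nth_tpos by auto
qed

lemma gale_le_trans: "gale_le n t I J \<Longrightarrow> gale_le n t J K \<Longrightarrow> gale_le n t I K"
  unfolding gale_le_def by (metis le_trans)

lemma gale_nat_antisym:
  assumes "finite S" "finite T" "gale_nat S T" "gale_nat T S"
  shows "S = T"
proof -
  have "sorted_list_of_set S = sorted_list_of_set T"
    using assms by (intro nth_equalityI) (auto simp: gale_nat_def intro: antisym)
  then show ?thesis
    using assms(1,2) by (metis sorted_list_of_set.set_sorted_key_list_of_set)
qed

lemma gale_le_antisym:
  assumes t: "t \<in> {1..n}" and I: "I \<subseteq> {1..n}" and J: "J \<subseteq> {1..n}"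
    and "gale_le n t I J" "gale_le n t J I"
  shows "I = J"
proof -
  have "tpos n t ` I = tpos n t ` J"
    using assms finite_subset[OF I] finite_subset[OF J]
    by (intro gale_nat_antisym) (auto simp: gale_le_iff_gale_nat)
  then show ?thesis
    using inj_on_tpos[OF t] I J by (metis inj_on_image_eq_iff)
qed

lemma gale_nat_atLeastLessThan: "finite T \<Longrightarrow> gale_nat {0..<card T} T"
  unfolding gale_nat_def by (simp add: sorted_wrt_less_idx)

lemma sorted_list_of_set_last_ge_iff:
  assumes fin: "finite T" and card: "card T = k" and k: "1 \<le> k"
  shows "k \<le> sorted_list_of_set T ! (k - 1) \<longleftrightarrow> T \<noteq> {0..<k}"
proof
  let ?L = "sorted_list_of_set T"
  assume last: "k \<le> ?L ! (k - 1)"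
  show "T \<noteq> {0..<k}"
  proof
    assume "T = {0..<k}"
    then have "?L ! (k - 1) = k - 1"
      using k by simp
    then show False
      using last k by simp
  qed
next
  let ?L = "sorted_list_of_set T"
  assume ne: "T \<noteq> {0..<k}"
  have len: "length ?L = k"
    using fin card by simp
  show "k \<le> ?L ! (k - 1)"
  proof (rule ccontr)
    assume small: "\<not> k \<le> ?L ! (k - 1)"
    have "x < k" if "x \<in> T" for x
    proof -
      have "x \<in> set ?L"
        using that fin by simp
      then obtain j where j: "j < k" "x = ?L ! j"
        using len by (auto simp: in_set_conv_nth)
      have "?L ! j \<le> ?L ! (k - 1)"
        using j len by (intro sorted_nth_mono) auto
      then show ?thesis
        using j small by simp
    qed
    then have "T \<subseteq> {0..<k}"
      by auto
    then have "T = {0..<k}"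
      using card by (intro card_subset_eq) auto
    with ne show False
      by blast
  qed
qed

lemma gale_nat_gap_iff:
  assumes fin: "finite T" and card: "card T = k" and k: "1 \<le> k"
  shows "gale_nat (insert k {0..<k - 1}) T \<longleftrightarrow> T \<noteq> {0..<k}"
proof -
  let ?L = "sorted_list_of_set T"
  have gap_list: "sorted_list_of_set (insert k {0..<k - 1}) = [0..<k - 1] @ [k]"
    by (subst sorted_list_of_set_unique[symmetric]) (auto simp: sorted_wrt_append)
  have above_idx: "i \<le> ?L ! i" if "i < k" for i
    using that fin card by (simp add: sorted_wrt_less_idx)
  have "(\<forall>i < k. ([0..<k - 1] @ [k]) ! i \<le> ?L ! i) \<longleftrightarrow> k \<le> ?L ! (k - 1)"
  proof
    assume H: "\<forall>i < k. ([0..<k - 1] @ [k]) ! i \<le> ?L ! i"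
    have "k - 1 < k"
      using k by simp
    then have "([0..<k - 1] @ [k]) ! (k - 1) \<le> ?L ! (k - 1)"
      using H by blast
    moreover have "([0..<k - 1] @ [k]) ! (k - 1) = k"
      by (simp add: nth_append)
    ultimately show "k \<le> ?L ! (k - 1)"
      by simp
  next
    assume last: "k \<le> ?L ! (k - 1)"
    show "\<forall>i < k. ([0..<k - 1] @ [k]) ! i \<le> ?L ! i"
    proof (intro allI impI)
      fix i
      assume i: "i < k"
      show "([0..<k - 1] @ [k]) ! i \<le> ?L ! i"
      proof (cases "i < k - 1")
        case True
        then show ?thesis
          using above_idx[OF i] by (simp add: nth_append)
      next
        case False
        then have "i = k - 1"
          using i by linarith
        then show ?thesis
          using last by (simp add: nth_append)
      qed
    qed
  qed
  also have "\<dots> \<longleftrightarrow> T \<noteq> {0..<k}"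
    by (rule sorted_list_of_set_last_ge_iff[OF fin card k])
  finally show ?thesis
    unfolding gale_nat_def gap_list using card k by simp
qed

lemma gale_nat_shift_down:
  assumes fin: "finite T" and q: "q \<in> T" "0 < q" "q - 1 \<notin> T"
  shows "gale_nat (insert (q - 1) (T - {q})) T"
proof -
  define g where "g y = (if y = q then q - 1 else y)" for y
  have "card T > 0"
    using fin q card_gt_0_iff by blast
  then have card: "card (insert (q - 1) (T - {q})) = card T"
    using fin q by (simp add: card_Diff_singleton)
  have mono: "g x < g y" if "x \<in> T" "y \<in> T" "x < y" for x y
  proof -
    have "x \<noteq> q - 1"
      using that q by auto
    then show ?thesis
      using that by (auto simp: g_def)
  qed
  have "sorted_wrt (\<lambda>x y. g x < g y) (sorted_list_of_set T)"
    by (rule sorted_wrt_mono_rel[of _ "(<)"]) (use fin mono in auto)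
  then have "sorted_wrt (<) (map g (sorted_list_of_set T))"
    unfolding sorted_wrt_map .
  moreover have "g ` T = insert (q - 1) (T - {q})"
    using q by (auto simp: g_def image_def)
  ultimately have "sorted_list_of_set (insert (q - 1) (T - {q})) = map g (sorted_list_of_set T)"
    using card fin by (subst sorted_list_of_set_unique[symmetric]) auto
  then show ?thesis
    unfolding gale_nat_def using card fin by (auto simp: g_def)
qed

lemma exists_shift_down:
  assumes fin: "finite T" and ne: "T \<noteq> {0..<card T}"
  shows "\<exists>q\<in>T. 0 < q \<and> q - 1 \<notin> T"
proof -
  define m where "m = (LEAST m. m \<notin> T)"
  have "\<exists>m. m \<notin> T"
    using fin by (rule ex_new_if_finite[OF infinite_UNIV_nat])
  then have m: "m \<notin> T"
    unfolding m_def by (rule LeastI_ex)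
  have below_m: "{0..<m} \<subseteq> T"
    unfolding m_def using not_less_Least by force
  have "T \<noteq> {0..<m}"
    using ne by auto
  then obtain q0 where "q0 \<in> T" "q0 \<notin> {0..<m}"
    using below_m by blast
  then have ex: "\<exists>q. q \<in> T \<and> m < q"
    using m by (metis atLeastLessThan_iff le0 linorder_neqE_nat)
  define q where "q = (LEAST q. q \<in> T \<and> m < q)"
  have q: "q \<in> T" "m < q"
    using LeastI_ex[OF ex] unfolding q_def by auto
  have "q - 1 \<notin> T"
  proof
    assume "q - 1 \<in> T"
    then have "q - 1 \<noteq> m"
      using m by auto
    then have "m < q - 1"
      using q by linarith
    then show False
      using Least_le[of "\<lambda>q. q \<in> T \<and> m < q" "q - 1"] \<open>q - 1 \<in> T\<close> q unfolding q_def
      by auto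
  qed
  then show ?thesis
    using q by auto
qed

text \<open>\<open>cyc_gap k n t\<close> is \<open>C^(t)\<close> with its \<open><\<^sub>t\<close>-largest element \<open>t+k-1\<close> replaced by \<open>t+k\<close>:
  the \<open>\<le>\<^sub>t\<close>-least \<open>k\<close>-set other than \<open>C^(t)\<close>.\<close>

definition cyc_gap :: "nat \<Rightarrow> nat \<Rightarrow> nat \<Rightarrow> nat set" where
  "cyc_gap k n t = tnth n t ` insert k {0..<k - 1}"

lemma cyc_gap_subset: "t \<in> {1..n} \<Longrightarrow> cyc_gap k n t \<subseteq> {1..n}"
  using tnth_in_range[of n t] unfolding cyc_gap_def by auto

lemma tpos_image_cyc_gap: "t \<in> {1..n} \<Longrightarrow> k < n \<Longrightarrow> tpos n t ` cyc_gap k n t = insert k {0..<k - 1}"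
  unfolding cyc_gap_def by (rule tpos_image_tnth) auto

lemma card_cyc_gap:
  assumes t: "t \<in> {1..n}" and k: "1 \<le> k" "k < n"
  shows "card (cyc_gap k n t) = k"
proof -
  have "inj_on (tnth n t) (insert k {0..<k - 1})"
    by (rule inj_on_subset[OF inj_on_tnth[OF t]]) (use k in auto)
  then show ?thesis
    using k unfolding cyc_gap_def by (simp add: card_image)
qed

lemma gale_le_cyc:
  assumes t: "t \<in> {1..n}" and J: "J \<subseteq> {1..n}" "card J = k" and k: "k \<le> n"
  shows "gale_le n t (cyc k n t) J"
proof -
  have "gale_nat {0..<k} (tpos n t ` J)"
    using gale_nat_atLeastLessThan[of "tpos n t ` J"] finite_subset[OF J(1)]
    by (simp add: card_tpos_image[OF t J(1)] J(2))
  then show ?thesis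
    by (simp add: gale_le_iff_gale_nat[OF t cyc_subset[OF t] J(1)] tpos_image_cyc[OF t k])
qed

lemma gale_le_cyc_gap_iff:
  assumes t: "t \<in> {1..n}" and J: "J \<subseteq> {1..n}" "card J = k" and k: "1 \<le> k" "k < n"
  shows "gale_le n t (cyc_gap k n t) J \<longleftrightarrow> J \<noteq> cyc k n t"
proof -
  have "gale_le n t (cyc_gap k n t) J \<longleftrightarrow> gale_nat (insert k {0..<k - 1}) (tpos n t ` J)"
    by (simp add: gale_le_iff_gale_nat[OF t cyc_gap_subset[OF t] J(1)] tpos_image_cyc_gap[OF t k(2)])
  also have "\<dots> \<longleftrightarrow> tpos n t ` J \<noteq> {0..<k}"
    using finite_subset[OF J(1)] card_tpos_image[OF t J(1)] J(2) k(1) by (intro gale_nat_gap_iff) auto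
  finally show ?thesis
    using cyc_eq_iff_tpos_image[OF t J(1)] k by simp
qed

lemma exists_exchange_gale_le:
  assumes t: "t \<in> {1..n}" and J: "J \<subseteq> {1..n}" "card J = k" and k: "k \<le> n"
    and ne: "J \<noteq> cyc k n t"
  shows "\<exists>j\<in>J. \<exists>x\<in>{1..n} - J. gale_le n t (insert x (J - {j})) J"
proof -
  define T where "T = tpos n t ` J"
  have fin: "finite T"
    unfolding T_def using J finite_subset by blast
  have "T \<noteq> {0..<card T}"
    using ne cyc_eq_iff_tpos_image[OF t J(1) k] card_tpos_image[OF t J(1)] J(2)
    unfolding T_def by simp
  then obtain q where q: "q \<in> T" "0 < q" "q - 1 \<notin> T"
    using exists_shift_down[OF fin] by blast
  have "q < n"
    using q(1) tpos_less[of n t] t unfolding T_def by auto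
  define j where "j = tnth n t q"
  define x where "x = tnth n t (q - 1)"
  have tpos_j: "tpos n t j = q" and tpos_x: "tpos n t x = q - 1"
    unfolding j_def x_def using tpos_tnth[OF t] \<open>q < n\<close> by auto
  have j: "j \<in> J"
    using q(1) tnth_tpos[OF t] J(1) unfolding T_def j_def by auto
  have x: "x \<in> {1..n} - J"
    using tnth_in_range[of n t] \<open>q < n\<close> q(3) tpos_x unfolding x_def T_def by force
  have "tpos n t ` (J - {j}) = tpos n t ` J - tpos n t ` {j}"
    using J(1) j by (intro inj_on_image_set_diff[OF inj_on_tpos[OF t]]) auto
  then have "tpos n t ` insert x (J - {j}) = insert (q - 1) (T - {q})"
    using tpos_x tpos_j unfolding T_def by simp
  then have "gale_nat (tpos n t ` insert x (J - {j})) (tpos n t ` J)"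
    using gale_nat_shift_down[OF fin q] unfolding T_def by simp
  moreover have "insert x (J - {j}) \<subseteq> {1..n}"
    using x J(1) by auto
  ultimately have "gale_le n t (insert x (J - {j})) J"
    using gale_le_iff_gale_nat[OF t _ J(1)] by blast
  then show ?thesis
    using j x by blast
qed

section \<open>Sparse paving matroids\<close>

definition johnson_adjacent :: "'a set \<Rightarrow> nat \<Rightarrow> 'a set \<Rightarrow> 'a set \<Rightarrow> bool" where
  "johnson_adjacent E r X Y \<longleftrightarrow> (\<exists>Z x y. Z \<subseteq> E \<and> card Z = r - 1 \<and> x \<in> E - Z \<and> y \<in> E - Z \<and>
     x \<noteq> y \<and> X = insert x Z \<and> Y = insert y Z)"

definition johnson_stable :: "'a set \<Rightarrow> nat \<Rightarrow> 'a set set \<Rightarrow> bool" where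
  "johnson_stable E r F \<longleftrightarrow> (\<forall>X\<in>F. \<forall>Y\<in>F. \<not> johnson_adjacent E r X Y)"

definition uniform_minus :: "'a set \<Rightarrow> nat \<Rightarrow> 'a set set \<Rightarrow> 'a set set" where
  "uniform_minus E r F = {Y. Y \<subseteq> E \<and> card Y = r \<and> Y \<notin> F}"

lemma johnson_adjacentI:
  "Z \<subseteq> E \<Longrightarrow> card Z = r - 1 \<Longrightarrow> x \<in> E - Z \<Longrightarrow> y \<in> E - Z \<Longrightarrow> x \<noteq> y \<Longrightarrow>
    johnson_adjacent E r (insert x Z) (insert y Z)"
  unfolding johnson_adjacent_def by blast

lemma johnson_adjacent_imp_neq: "johnson_adjacent E r X Y \<Longrightarrow> X \<noteq> Y"
  unfolding johnson_adjacent_def by auto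

lemma johnson_stableD: "johnson_stable E r F \<Longrightarrow> johnson_adjacent E r X Y \<Longrightarrow> X \<notin> F \<or> Y \<notin> F"
  unfolding johnson_stable_def by blast

lemma johnson_adjacent_complements:
  assumes fin: "finite E" and r: "1 \<le> r" "r + 1 \<le> card E" and adj: "johnson_adjacent E r X Y"
  shows "johnson_adjacent E (card E - r) (E - X) (E - Y)"
proof -
  obtain Z x y where Z: "Z \<subseteq> E" "card Z = r - 1" and xy: "x \<in> E - Z" "y \<in> E - Z" "x \<noteq> y"
    and XY: "X = insert x Z" "Y = insert y Z"
    using adj unfolding johnson_adjacent_def by blast
  define Z' where "Z' = E - Z - {x, y}"
  have "card Z' = card E - (r - 1) - 2"
    unfolding Z'_def using Z xy fin by (simp add: card_Diff_subset finite_subset)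
  then have "card Z' = card E - r - 1"
    using r by simp
  moreover have "E - X = insert y Z'" "E - Y = insert x Z'"
    unfolding Z'_def XY using xy by auto
  ultimately show ?thesis
    using xy unfolding Z'_def by (auto intro!: johnson_adjacentI)
qed

lemma johnson_stable_complements:
  assumes fin: "finite E" and r: "1 \<le> r" "r + 1 \<le> card E" and stable: "johnson_stable E r F"
  shows "johnson_stable E (card E - r) {Y. E - Y \<in> F}"
  unfolding johnson_stable_def
proof (intro ballI notI)
  fix X Y
  assume "X \<in> {Y. E - Y \<in> F}" "Y \<in> {Y. E - Y \<in> F}" and adj: "johnson_adjacent E (card E - r) X Y"
  moreover have "johnson_adjacent E (card E - (card E - r)) (E - X) (E - Y)"
    using r by (intro johnson_adjacent_complements[OF fin _ _ adj]) auto
  ultimately show False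
    using stable r by (auto dest: johnson_stableD)
qed

lemma indep_uniform_minus:
  assumes fin: "finite E" and r: "r + 1 \<le> card E" and stable: "johnson_stable E r F"
    and X: "X \<subseteq> E" "card X < r"
  shows "indep (uniform_minus E r F) X"
proof -
  have "\<exists>Z. X \<subseteq> Z \<and> Z \<subseteq> E \<and> card Z = r - 1"
    by (rule exists_subset_between) (use X fin r in auto)
  then obtain Z where Z: "X \<subseteq> Z" "Z \<subseteq> E" "card Z = r - 1"
    by blast
  have fin_Z: "finite Z"
    using Z fin finite_subset by blast
  have "card (E - Z) \<ge> 2"
    using Z X r fin fin_Z by (simp add: card_Diff_subset)
  then obtain x y where xy: "x \<in> E - Z" "y \<in> E - Z" "x \<noteq> y"
    by (metis card_le_Suc_iff numeral_2_eq_2 insert_iff ex_in_conv)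
  then have "insert x Z \<notin> F \<or> insert y Z \<notin> F"
    using Z by (intro johnson_stableD[OF stable] johnson_adjacentI) auto
  moreover have "card (insert x Z) = r" "card (insert y Z) = r"
    using xy fin_Z Z X by auto
  ultimately show ?thesis
    unfolding indep_def uniform_minus_def using xy Z by blast
qed

lemma paving_uniform_minus:
  assumes "finite E" "r + 1 \<le> card E" "johnson_stable E r F"
  shows "paving E r (uniform_minus E r F)"
  unfolding paving_def circuit_def using indep_uniform_minus[OF assms] by (meson not_le)

lemma uniform_minus_exchange:
  assumes stable: "johnson_stable E r F" and r: "1 \<le> r" and fin: "finite E"
    and B1: "B1 \<in> uniform_minus E r F" and B2: "B2 \<in> uniform_minus E r F" and x: "x \<in> B1 - B2"
  shows "\<exists>y\<in>B2 - B1. insert y (B1 - {x}) \<in> uniform_minus E r F"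
proof -
  let ?Z = "B1 - {x}"
  have sub: "B1 \<subseteq> E" "B2 \<subseteq> E" and card: "card B1 = r" "card B2 = r"
    using B1 B2 by (auto simp: uniform_minus_def)
  have fin12: "finite B1" "finite B2"
    using sub fin finite_subset by auto
  have card_Z: "card ?Z = r - 1"
    using x card by simp
  have exchange: "insert y ?Z \<in> uniform_minus E r F \<longleftrightarrow> insert y ?Z \<notin> F" if "y \<in> B2 - B1" for y
    using that sub card_Z fin12 r by (auto simp: uniform_minus_def)
  have card_diff: "card (B2 - B1) = card (B1 - B2)"
    using fin12 card by (metis card_Diff_subset_Int finite_Int inf_commute)
  show ?thesis
  proof (cases "2 \<le> card (B2 - B1)")
    case True
    then obtain y1 y2 where y: "y1 \<in> B2 - B1" "y2 \<in> B2 - B1" "y1 \<noteq> y2"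
      by (metis card_le_Suc_iff numeral_2_eq_2 insert_iff ex_in_conv)
    then have "insert y1 ?Z \<notin> F \<or> insert y2 ?Z \<notin> F"
      using sub card_Z by (intro johnson_stableD[OF stable] johnson_adjacentI) auto
    then show ?thesis
      using exchange y by blast
  next
    case False
    moreover have "card (B1 - B2) \<noteq> 0"
      using x fin12 by auto
    ultimately have "card (B2 - B1) = 1" "card (B1 - B2) = 1"
      using card_diff by auto
    then obtain y b where "B2 - B1 = {y}" "B1 - B2 = {b}"
      by (meson card_1_singletonE)
    moreover have "b = x"
      using x calculation by auto
    ultimately have "insert y ?Z = B2" "y \<in> B2 - B1"
      by auto
    then show ?thesis
      using B2 by auto
  qed
qed

lemma matroid_bases_uniform_minus:
  assumes fin: "finite E" and r: "1 \<le> r" "r + 1 \<le> card E" and stable: "johnson_stable E r F"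
  shows "matroid_bases E (uniform_minus E r F)"
proof -
  have "uniform_minus E r F \<noteq> {}"
    using indep_uniform_minus[OF fin r(2) stable, of "{}"] r(1) by (auto simp: indep_def)
  then show ?thesis
    unfolding matroid_bases_def using uniform_minus_exchange[OF stable r(1) fin]
    by (auto simp: uniform_minus_def)
qed

lemma dual_bases_uniform_minus:
  assumes fin: "finite E" and r: "r \<le> card E"
  shows "dual_bases E (uniform_minus E r F) = uniform_minus E (card E - r) {Y. E - Y \<in> F}"
proof
  show "dual_bases E (uniform_minus E r F) \<subseteq> uniform_minus E (card E - r) {Y. E - Y \<in> F}"
    unfolding dual_bases_def uniform_minus_def using fin
    by (auto simp: card_Diff_subset double_diff finite_subset)
next
  show "uniform_minus E (card E - r) {Y. E - Y \<in> F} \<subseteq> dual_bases E (uniform_minus E r F)"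
  proof
    fix Y
    assume "Y \<in> uniform_minus E (card E - r) {Y. E - Y \<in> F}"
    then have Y: "Y \<subseteq> E" "card Y = card E - r" "E - Y \<notin> F"
      unfolding uniform_minus_def by auto
    then have "card (E - Y) = r"
      using fin r by (simp add: card_Diff_subset finite_subset)
    then have "E - Y \<in> uniform_minus E r F"
      using Y unfolding uniform_minus_def by auto
    moreover have "Y = E - (E - Y)"
      using Y by auto
    ultimately show "Y \<in> dual_bases E (uniform_minus E r F)"
      unfolding dual_bases_def by blast
  qed
qed

lemma sparse_paving_uniform_minus:
  assumes fin: "finite E" and r: "1 \<le> r" "r + 1 \<le> card E" and stable: "johnson_stable E r F"
  shows "matroid_bases E (uniform_minus E r F) \<and> sparse_paving E r (uniform_minus E r F)"
proof -
  have "paving E (card E - r) (uniform_minus E (card E - r) {Y. E - Y \<in> F})"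
    using r by (intro paving_uniform_minus fin johnson_stable_complements[OF fin r stable]) auto
  then show ?thesis
    unfolding sparse_paving_def
    using matroid_bases_uniform_minus[OF fin r stable] paving_uniform_minus[OF fin r(2) stable]
      dual_bases_uniform_minus[OF fin, of r F] r
    by simp
qed

lemma indep_if_paving:
  assumes paving: "paving E r B" and X: "X \<subseteq> E" "finite X" "card X < r"
  shows "indep B X"
proof (rule ccontr)
  assume "\<not> indep B X"
  then obtain D where D: "D \<subseteq> X" "\<not> indep B D"
    and minimal: "\<And>D'. D' \<subseteq> X \<Longrightarrow> card D' < card D \<Longrightarrow> indep B D'"
    using ex_has_least_nat[of "\<lambda>D. D \<subseteq> X \<and> \<not> indep B D" X card] by (auto simp: not_le[symmetric])
  have "circuit E B D"
    unfolding circuit_def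
  proof (intro conjI allI impI)
    show "D \<subseteq> E" "\<not> indep B D"
      using D X by auto
    fix D'
    assume "D' \<subset> D"
    then show "indep B D'"
      using minimal D X by (meson finite_subset psubset_card_mono psubset_imp_subset subset_trans)
  qed
  then have "r \<le> card D"
    using paving unfolding paving_def by blast
  moreover have "card D \<le> card X"
    using D X card_mono by blast
  ultimately show False
    using X by simp
qed

lemma paving_basis_extending:
  assumes fin: "finite E" and paving: "paving E r B" and card_B: "\<forall>Y\<in>B. card Y = r"
    and Z: "Z \<subseteq> E" "card Z = r - 1" and r: "1 \<le> r"
  obtains c where "c \<notin> Z" "insert c Z \<in> B"
proof -
  have fin_Z: "finite Z"
    using Z fin finite_subset by blast
  obtain B' where B': "B' \<in> B" "Z \<subseteq> B'"
    using indep_if_paving[OF paving Z(1) fin_Z] Z r unfolding indep_def by auto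
  have "card (B' - Z) = 1"
    using B' card_B Z fin_Z r by (simp add: card_Diff_subset)
  then obtain c where "B' - Z = {c}"
    by (auto simp: card_Suc_eq)
  then have "B' = insert c Z" "c \<notin> Z"
    using B' by auto
  then show ?thesis
    using that B' by simp
qed

lemma copaving_basis_inside:
  assumes fin: "finite E" and paving_dual: "paving E (card E - r) (dual_bases E B)"
    and sub_B: "\<forall>Y\<in>B. Y \<subseteq> E" and W: "W \<subseteq> E" "card W = r + 1"
  obtains B0 where "B0 \<in> B" "B0 \<subseteq> W"
proof -
  have "card (E - W) < card E - r"
    using W fin card_mono[OF fin W(1)] by (simp add: card_Diff_subset finite_subset)
  then have "indep (dual_bases E B) (E - W)"
    using fin by (intro indep_if_paving[OF paving_dual]) auto
  then show ?thesis
    using that sub_B unfolding indep_def dual_bases_def by blast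
qed

lemma sparse_paving_basis_of_adjacent:
  assumes fin: "finite E" and bases: "matroid_bases E B" and card_B: "\<forall>Y\<in>B. card Y = r"
    and sparse: "sparse_paving E r B" and r: "1 \<le> r" "r + 1 \<le> card E"
    and adj: "johnson_adjacent E r X Y"
  shows "X \<in> B \<or> Y \<in> B"
proof (rule ccontr)
  assume non_bases: "\<not> (X \<in> B \<or> Y \<in> B)"
  obtain Z x y where Z: "Z \<subseteq> E" "card Z = r - 1" and xy: "x \<in> E - Z" "y \<in> E - Z" "x \<noteq> y"
    and XY: "X = insert x Z" "Y = insert y Z"
    using adj unfolding johnson_adjacent_def by blast
  have sub_B: "\<forall>Y\<in>B. Y \<subseteq> E"
    and exch: "\<forall>B1\<in>B. \<forall>B2\<in>B. \<forall>x\<in>B1 - B2. \<exists>y\<in>B2 - B1. insert y (B1 - {x}) \<in> B"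
    using bases unfolding matroid_bases_def by auto
  have paving: "paving E r B" and paving_dual: "paving E (card E - r) (dual_bases E B)"
    using sparse unfolding sparse_paving_def by auto
  \<comment> \<open>exchanging \<open>c\<close> against a basis inside \<open>Z \<union> {x, y}\<close> produces \<open>X\<close> or \<open>Y\<close>\<close>
  obtain c where c: "c \<notin> Z" "insert c Z \<in> B"
    using paving_basis_extending[OF fin paving card_B Z r(1)] .
  have "c \<noteq> x" "c \<noteq> y"
    using non_bases c XY by auto
  have "insert x (insert y Z) \<subseteq> E" "card (insert x (insert y Z)) = r + 1"
    using finite_subset[OF Z(1) fin] Z xy r by auto
  then obtain B0 where B0: "B0 \<in> B" "B0 \<subseteq> insert x (insert y Z)"
    by (rule copaving_basis_inside[OF fin paving_dual sub_B])
  then have "c \<in> insert c Z - B0"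
    using \<open>c \<noteq> x\<close> \<open>c \<noteq> y\<close> c by auto
  then obtain y' where y': "y' \<in> B0 - insert c Z" "insert y' (insert c Z - {c}) \<in> B"
    using exch c(2) B0(1) by blast
  moreover have "insert c Z - {c} = Z"
    using c by auto
  moreover have "y' = x \<or> y' = y"
    using y' B0 by auto
  ultimately show False
    using non_bases XY by auto
qed

section \<open>Cyclic intervals in the Johnson graph\<close>

lemma tpos_nonadjacent:
  assumes A: "A \<subseteq> {1..n}" "nonadjacent n A" and ab: "a \<in> A" "b \<in> A" "a \<noteq> b"
  shows "2 \<le> tpos n a b \<and> tpos n a b \<le> n - 2"
proof -
  have a: "a \<in> {1..n}" and b: "b \<in> {1..n}"
    using A ab by auto
  define d where "d = tpos n a b"
  have "d < n"
    using tpos_less[of n a b] a unfolding d_def by simp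
  have b_eq: "b = tnth n a d"
    using tnth_tpos[OF a b] unfolding d_def by simp
  have "d \<noteq> 0"
    using b_eq tnth_0[OF a] ab(3) by metis
  moreover have "d \<noteq> 1"
    using b_eq nxt_eq_tnth[OF a] A ab unfolding nonadjacent_def by auto
  moreover have "d \<noteq> n - 1"
    using b_eq prv_eq_tnth[OF a] A ab unfolding nonadjacent_def by auto
  ultimately show ?thesis
    using \<open>d < n\<close> unfolding d_def by auto
qed

lemma card_cyc_Int_le:
  assumes a: "a \<in> {1..n}" and b: "b \<in> {1..n}" and kn: "k + 2 \<le> n"
    and d: "2 \<le> tpos n a b" "tpos n a b \<le> n - 2"
  shows "card (cyc k n a \<inter> cyc k n b) \<le> k - 2"
proof -
  define d where "d = tpos n a b"
  \<comment> \<open>in \<open><\<^sub>a\<close>-positions the intervals are \<open>[0, k)\<close> and \<open>[d, d + k)\<close> taken mod \<open>n\<close>\<close>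
  have "cyc k n a \<inter> cyc k n b \<subseteq> tnth n a ` ({d..<k} \<union> {n..<d + k})"
  proof
    fix z
    assume z: "z \<in> cyc k n a \<inter> cyc k n b"
    then obtain p where p: "p < k" "z = tnth n a p"
      using cyc_eq_tnth_image[of a k n] a by auto
    obtain q where q: "d \<le> q" "q < d + k" "z = tnth n a q"
      using z cyc_shift[OF a b] unfolding d_def by auto
    have "p mod n = q mod n"
      using p q tnth_eq_iff by metis
    then have "q < n \<Longrightarrow> q < k"
      using p kn by simp
    then have "q \<in> {d..<k} \<union> {n..<d + k}"
      using q by auto
    then show "z \<in> tnth n a ` ({d..<k} \<union> {n..<d + k})"
      using q(3) by blast
  qed
  then have "card (cyc k n a \<inter> cyc k n b) \<le> card (tnth n a ` ({d..<k} \<union> {n..<d + k}))"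
    by (rule card_mono[rotated]) simp
  also have "\<dots> \<le> card ({d..<k} \<union> {n..<d + k})"
    by (rule card_image_le) simp
  also have "\<dots> \<le> card {d..<k} + card {n..<d + k}"
    by (rule card_Un_le)
  also have "\<dots> \<le> k - 2"
    using d kn unfolding d_def by auto
  finally show ?thesis .
qed

lemma johnson_stable_cyc:
  assumes k: "2 \<le> k" "k + 2 \<le> n" and A: "A \<subseteq> {1..n}" "nonadjacent n A"
  shows "johnson_stable {1..n} k (cyc k n ` A)"
  unfolding johnson_stable_def
proof (intro ballI notI)
  fix X Y
  assume "X \<in> cyc k n ` A" "Y \<in> cyc k n ` A" and adj: "johnson_adjacent {1..n} k X Y"
  then obtain a b where ab: "a \<in> A" "b \<in> A" "X = cyc k n a" "Y = cyc k n b"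
    by auto
  obtain Z x y where Z: "card Z = k - 1" and XY: "X = insert x Z" "Y = insert y Z"
    using adj unfolding johnson_adjacent_def by blast
  have "a \<noteq> b"
    using ab johnson_adjacent_imp_neq[OF adj] by auto
  then have "card (cyc k n a \<inter> cyc k n b) \<le> k - 2"
    using ab A tpos_nonadjacent[OF A ab(1,2)] k by (intro card_cyc_Int_le) auto
  moreover have "finite (cyc k n a)"
    using ab A finite_subset[OF cyc_subset[of a n k]] by auto
  then have "card Z \<le> card (cyc k n a \<inter> cyc k n b)"
    using XY ab by (intro card_mono) auto
  ultimately show False
    using Z k by simp
qed

lemma inj_on_cyc:
  assumes k: "1 \<le> k" "k < n"
  shows "inj_on (cyc k n) {1..n}"
proof (rule inj_onI, rule ccontr)
  fix a b
  assume a: "a \<in> {1..n}" and b: "b \<in> {1..n}" and eq: "cyc k n a = cyc k n b" and "a \<noteq> b"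
  define d where "d = tpos n a b"
  have "d < n"
    using tpos_less[of n a b] a unfolding d_def by auto
  have "d \<noteq> 0"
    using tnth_tpos[OF a b] tnth_0[OF a] \<open>a \<noteq> b\<close> unfolding d_def by metis
  \<comment> \<open>position \<open>q\<close> of \<open><\<^sub>a\<close> belongs to \<open>C^(b)\<close> but lies beyond the first \<open>k\<close> positions\<close>
  define q where "q = d + min (k - 1) (n - d - 1)"
  have q: "d \<le> q" "q < d + k" "q < n" "k \<le> q"
    using \<open>d \<noteq> 0\<close> \<open>d < n\<close> k unfolding q_def by auto
  have "tnth n a q \<in> cyc k n a"
    using eq cyc_shift[OF a b] q unfolding d_def by auto
  then obtain p where p: "p < k" "tnth n a q = tnth n a p"
    using cyc_eq_tnth_image[of a k n] a by auto
  then have "q = p"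
    using q k by (simp add: tnth_eq_iff)
  then show False
    using p q by simp
qed

lemma johnson_adjacent_tnth_image:
  assumes t: "t \<in> {1..n}" and S: "S \<subseteq> {0..<n}"
    and pq: "p \<in> {0..<n} - S" "q \<in> {0..<n} - S" "p \<noteq> q"
  shows "johnson_adjacent {1..n} (Suc (card S)) (tnth n t ` insert p S) (tnth n t ` insert q S)"
proof -
  have inj: "inj_on (tnth n t) {0..<n}"
    by (rule inj_on_tnth[OF t])
  have "card (tnth n t ` S) = card S"
    using inj S by (simp add: card_image inj_on_subset)
  moreover have "tnth n t p \<notin> tnth n t ` S" "tnth n t q \<notin> tnth n t ` S" "tnth n t p \<noteq> tnth n t q"
    using inj pq S by (auto simp: inj_on_image_mem_iff inj_on_eq_iff)
  moreover have "tnth n t ` S \<subseteq> {1..n}" "tnth n t p \<in> {1..n}" "tnth n t q \<in> {1..n}"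
    using tnth_in_range[of n t] t by auto
  ultimately show ?thesis
    by (simp add: johnson_adjacentI)
qed

lemma johnson_adjacent_cyc_nxt:
  assumes k: "1 \<le> k" "k < n" and a: "a \<in> {1..n}"
  shows "johnson_adjacent {1..n} k (cyc k n a) (cyc k n (nxt n a))"
proof -
  have "nxt n a \<in> {1..n}"
    using a k by (auto simp: nxt_def)
  then have "cyc k n (nxt n a) = (\<lambda>p. tnth n a (Suc p)) ` {0..<k}"
    using cyc_eq_tnth_image[of "nxt n a" k n] tnth_nxt[OF a] by simp
  also have "\<dots> = tnth n a ` Suc ` {0..<k}"
    by (simp only: image_image)
  also have "Suc ` {0..<k} = insert k {1..<k}"
    using k by (auto simp: image_Suc_atLeastLessThan)
  finally have "cyc k n (nxt n a) = tnth n a ` insert k {1..<k}" .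
  moreover have "{0..<k} = insert 0 {1..<k}"
    using k by auto
  then have "cyc k n a = tnth n a ` insert 0 {1..<k}"
    using cyc_eq_tnth_image[of a k n] a by simp
  ultimately show ?thesis
    using johnson_adjacent_tnth_image[OF a, of "{1..<k}" 0 k] k by simp
qed

lemma johnson_adjacent_cyc_cyc_gap:
  assumes k: "1 \<le> k" "k < n" and t: "t \<in> {1..n}"
  shows "johnson_adjacent {1..n} k (cyc k n t) (cyc_gap k n t)"
proof -
  have "{0..<k} = insert (k - 1) {0..<k - 1}"
    using k by auto
  then have "cyc k n t = tnth n t ` insert (k - 1) {0..<k - 1}"
    using cyc_eq_tnth_image[of t k n] t by simp
  then show ?thesis
    using johnson_adjacent_tnth_image[OF t, of "{0..<k - 1}" "k - 1" k] k unfolding cyc_gap_def by simp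
qed

section \<open>Sparse paving positroids\<close>

definition cyc_necklace :: "nat \<Rightarrow> nat \<Rightarrow> nat set \<Rightarrow> nat \<Rightarrow> nat set" where
  "cyc_necklace k n A i = (if i \<in> A then cyc_gap k n i else cyc k n i)"

context
  fixes n k :: nat
  assumes k: "2 \<le> k" "k + 2 \<le> n"
begin

lemma cyc_necklace_subset: "i \<in> {1..n} \<Longrightarrow> cyc_necklace k n A i \<subseteq> {1..n}"
  unfolding cyc_necklace_def using cyc_subset cyc_gap_subset by auto

lemma card_cyc_necklace: "i \<in> {1..n} \<Longrightarrow> card (cyc_necklace k n A i) = k"
  unfolding cyc_necklace_def using card_cyc[of i n k] card_cyc_gap[of i n k] k by auto

lemma self_mem_cyc_necklace: "i \<in> {1..n} \<Longrightarrow> i \<in> cyc_necklace k n A i"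
  unfolding cyc_necklace_def cyc_gap_def using cyc_eq_tnth_image[of i k n] tnth_0[of i n] k
  by (auto simp: image_iff intro: bexI[of _ 0])

lemma grassmann_necklace_cyc_necklace:
  assumes A: "nonadjacent n A"
  shows "grassmann_necklace n k (cyc_necklace k n A)"
  unfolding grassmann_necklace_def
proof (intro conjI ballI impI)
  fix i
  assume i: "i \<in> {1..n}"
  show "cyc_necklace k n A i \<subseteq> {1..n}" "card (cyc_necklace k n A i) = k"
    using cyc_necklace_subset[OF i] card_cyc_necklace[OF i] .
  show "cyc_necklace k n A (nxt n i) = cyc_necklace k n A i" if "i \<notin> cyc_necklace k n A i"
    using that self_mem_cyc_necklace[OF i] by simp
  have cyc_i: "cyc k n i = tnth n i ` {0..<k}"
    using cyc_eq_tnth_image i by auto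
  have cyc_nxt: "cyc k n (nxt n i) = tnth n (nxt n i) ` {0..<k}"
    using cyc_eq_tnth_image[of "nxt n i"] by (auto simp: nxt_def)
  consider "i \<in> A" "nxt n i \<notin> A" | "i \<notin> A" "nxt n i \<in> A" | "i \<notin> A" "nxt n i \<notin> A"
    using A i unfolding nonadjacent_def by auto
  then show "\<exists>j. cyc_necklace k n A (nxt n i) = cyc_necklace k n A i - {i} \<union> {j}"
  proof cases
    case 1
    then have "cyc_necklace k n A (nxt n i) = tnth n (nxt n i) ` {0..<k}"
      using cyc_nxt by (simp add: cyc_necklace_def)
    also have "\<dots> = (tnth n i ` (insert k {0..<k - 1}) - {i}) \<union> {tnth n i (k - 1)}"
      by (rule tnth_nxt_image[OF i]) (use k in \<open>auto simp: image_iff\<close>)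
    finally show ?thesis
      using 1 unfolding cyc_necklace_def cyc_gap_def by auto
  next
    case 2
    then have "cyc_necklace k n A (nxt n i) = tnth n (nxt n i) ` (insert k {0..<k - 1})"
      by (simp add: cyc_necklace_def cyc_gap_def)
    also have "\<dots> = (tnth n i ` {0..<k} - {i}) \<union> {tnth n i (k + 1)}"
      by (rule tnth_nxt_image[OF i]) (use k in \<open>auto simp: image_iff\<close>)
    finally show ?thesis
      using 2 cyc_i unfolding cyc_necklace_def by auto
  next
    case 3
    then have "cyc_necklace k n A (nxt n i) = tnth n (nxt n i) ` {0..<k}"
      using cyc_nxt by (simp add: cyc_necklace_def)
    also have "\<dots> = (tnth n i ` {0..<k} - {i}) \<union> {tnth n i k}"
      by (rule tnth_nxt_image[OF i]) (use k in \<open>auto simp: image_iff\<close>)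
    finally show ?thesis
      using 3 cyc_i unfolding cyc_necklace_def by auto
  qed
qed

lemma uniform_minus_cyc_eq_gale_bases:
  assumes A: "A \<subseteq> {1..n}"
  shows "uniform_minus {1..n} k (cyc k n ` A) =
    {J. J \<subseteq> {1..n} \<and> card J = k \<and> (\<forall>t\<in>{1..n}. gale_le n t (cyc_necklace k n A t) J)}"
proof -
  have "(\<forall>t\<in>{1..n}. gale_le n t (cyc_necklace k n A t) J) \<longleftrightarrow> J \<notin> cyc k n ` A"
    if J: "J \<subseteq> {1..n}" "card J = k" for J
  proof -
    have "gale_le n t (cyc_necklace k n A t) J \<longleftrightarrow> (t \<in> A \<longrightarrow> J \<noteq> cyc k n t)"
      if t: "t \<in> {1..n}" for t
      using gale_le_cyc_gap_iff[OF t J] gale_le_cyc[OF t J] k by (simp add: cyc_necklace_def)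
    then show ?thesis
      using A by auto
  qed
  then show ?thesis
    unfolding uniform_minus_def by auto
qed

lemma sparse_paving_positroid_uniform_minus_cyc:
  assumes A: "A \<subseteq> {1..n}" "nonadjacent n A"
  shows "positroid n k (uniform_minus {1..n} k (cyc k n ` A)) \<and>
    sparse_paving {1..n} k (uniform_minus {1..n} k (cyc k n ` A))"
  using sparse_paving_uniform_minus[OF _ _ _ johnson_stable_cyc[OF k A]] k
    grassmann_necklace_cyc_necklace[OF A(2)] uniform_minus_cyc_eq_gale_bases[OF A(1)]
  unfolding positroid_def by auto

lemma cyc_necklace_in_uniform_minus:
  assumes A: "A \<subseteq> {1..n}" "nonadjacent n A" and i: "i \<in> {1..n}"
  shows "cyc_necklace k n A i \<in> uniform_minus {1..n} k (cyc k n ` A)"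
proof -
  have "cyc_necklace k n A i \<notin> cyc k n ` A"
  proof (cases "i \<in> A")
    case False
    then show ?thesis
      using inj_on_cyc[of k n] k A(1) i by (auto simp: cyc_necklace_def inj_on_image_mem_iff)
  next
    case True
    then show ?thesis
      using johnson_stableD[OF johnson_stable_cyc[OF k A] johnson_adjacent_cyc_cyc_gap[OF _ _ i]] k
      by (auto simp: cyc_necklace_def)
  qed
  then show ?thesis
    unfolding uniform_minus_def using cyc_necklace_subset[OF i] card_cyc_necklace[OF i] by auto
qed

lemma necklace_of_uniform_minus_cyc:
  assumes A: "A \<subseteq> {1..n}" "nonadjacent n A" and i: "i \<in> {1..n}"
  shows "necklace_of n (uniform_minus {1..n} k (cyc k n ` A)) i = cyc_necklace k n A i"
  unfolding necklace_of_def
proof (rule the_equality)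
  let ?B = "uniform_minus {1..n} k (cyc k n ` A)"
  have least: "\<forall>J\<in>?B. gale_le n i (cyc_necklace k n A i) J"
    using uniform_minus_cyc_eq_gale_bases[OF A(1)] i by auto
  then show "cyc_necklace k n A i \<in> ?B \<and> (\<forall>J\<in>?B. gale_le n i (cyc_necklace k n A i) J)"
    using cyc_necklace_in_uniform_minus[OF A i] by blast
  fix I
  assume "I \<in> ?B \<and> (\<forall>J\<in>?B. gale_le n i I J)"
  then show "I = cyc_necklace k n A i"
    using gale_le_antisym[OF i _ cyc_necklace_subset[OF i]] least cyc_necklace_in_uniform_minus[OF A i]
    unfolding uniform_minus_def by blast
qed

lemma necklace_support_uniform_minus_cyc:
  assumes A: "A \<subseteq> {1..n}" "nonadjacent n A"
  shows "{i\<in>{1..n}. necklace_of n (uniform_minus {1..n} k (cyc k n ` A)) i \<noteq> cyc k n i} = A"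
proof -
  have "necklace_of n (uniform_minus {1..n} k (cyc k n ` A)) i \<noteq> cyc k n i \<longleftrightarrow> i \<in> A"
    if i: "i \<in> {1..n}" for i
  proof -
    have "cyc k n i \<noteq> cyc_gap k n i"
      using johnson_adjacent_cyc_cyc_gap[of k n i] i k by (auto dest: johnson_adjacent_imp_neq)
    then show ?thesis
      using necklace_of_uniform_minus_cyc[OF A i] by (auto simp: cyc_necklace_def)
  qed
  then show ?thesis
    using A(1) by blast
qed

lemma non_basis_is_cyc:
  assumes pos: "positroid n k B" and sparse: "sparse_paving {1..n} k B"
    and J: "J \<subseteq> {1..n}" "card J = k" "J \<notin> B"
  shows "J \<in> cyc k n ` {1..n}"
proof (rule ccontr)
  assume not_cyc: "J \<notin> cyc k n ` {1..n}"
  obtain I where B_eq: "B = {J. J \<subseteq> {1..n} \<and> card J = k \<and> (\<forall>t\<in>{1..n}. gale_le n t (I t) J)}"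
    using pos unfolding positroid_def by blast
  have bases: "matroid_bases {1..n} B"
    using pos unfolding positroid_def by blast
  obtain t where t: "t \<in> {1..n}" "\<not> gale_le n t (I t) J"
    using J B_eq by blast
  have "J \<noteq> cyc k n t"
    using not_cyc t by blast
  then obtain j x where j: "j \<in> J" and x: "x \<in> {1..n} - J"
    and below: "gale_le n t (insert x (J - {j})) J"
    using exists_exchange_gale_le[OF t(1) J(1,2)] k by force
  have "johnson_adjacent {1..n} k (insert j (J - {j})) (insert x (J - {j}))"
    using j x J finite_subset[OF J(1)] by (intro johnson_adjacentI) auto
  then have "J \<in> B \<or> insert x (J - {j}) \<in> B"
    using B_eq j k by (intro sparse_paving_basis_of_adjacent[OF _ bases _ sparse]) (auto simp: insert_absorb)
  then have "insert x (J - {j}) \<in> B"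
    using J(3) by blast
  then show False
    using B_eq t gale_le_trans[OF _ below] by blast
qed

lemma sparse_paving_positroid_eq_uniform_minus_cyc:
  assumes pos: "positroid n k B" and sparse: "sparse_paving {1..n} k B"
  defines "A \<equiv> {a \<in> {1..n}. cyc k n a \<notin> B}"
  shows "nonadjacent n A \<and> B = uniform_minus {1..n} k (cyc k n ` A)"
proof
  have bases: "matroid_bases {1..n} B"
    using pos unfolding positroid_def by blast
  have sub_B: "\<forall>Y\<in>B. Y \<subseteq> {1..n}" and card_B: "\<forall>Y\<in>B. card Y = k"
    using pos unfolding positroid_def matroid_bases_def by auto
  have "\<not> (a \<in> A \<and> nxt n a \<in> A)" if a: "a \<in> {1..n}" for a
    using sparse_paving_basis_of_adjacent[OF _ bases card_B sparse _ _ johnson_adjacent_cyc_nxt[OF _ _ a]] k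
    unfolding A_def by auto
  moreover have "nxt n (prv n a) = a" "prv n a \<in> {1..n}" if "a \<in> {1..n}" for a
    using that by (auto simp: prv_def nxt_def)
  ultimately show "nonadjacent n A"
    unfolding nonadjacent_def A_def by (metis (no_types, lifting) mem_Collect_eq)
  show "B = uniform_minus {1..n} k (cyc k n ` A)"
  proof (intro equalityI subsetI)
    fix Y
    assume "Y \<in> B"
    then show "Y \<in> uniform_minus {1..n} k (cyc k n ` A)"
      using sub_B card_B unfolding uniform_minus_def A_def by auto
  next
    fix Y
    assume "Y \<in> uniform_minus {1..n} k (cyc k n ` A)"
    then have Y: "Y \<subseteq> {1..n}" "card Y = k" "Y \<notin> cyc k n ` A"
      unfolding uniform_minus_def by auto
    show "Y \<in> B"
    proof (rule ccontr)
      assume "Y \<notin> B"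
      moreover obtain t where "t \<in> {1..n}" "Y = cyc k n t"
        using non_basis_is_cyc[OF pos sparse Y(1,2) \<open>Y \<notin> B\<close>] by blast
      ultimately show False
        using Y(3) unfolding A_def by blast
    qed
  qed
qed

lemma sparse_paving_positroid_iff:
  "positroid n k B \<and> sparse_paving {1..n} k B \<longleftrightarrow>
    (\<exists>A. A \<subseteq> {1..n} \<and> nonadjacent n A \<and> B = uniform_minus {1..n} k (cyc k n ` A))"
  using sparse_paving_positroid_eq_uniform_minus_cyc[of B] sparse_paving_positroid_uniform_minus_cyc
  by (metis (no_types, lifting) mem_Collect_eq subsetI)

end

theorem corollary3p3:
  fixes n k :: nat
  assumes "2 \<le> k" and "k + 2 \<le> n"
  shows "bij_betw (\<lambda>\<B>. {i\<in>{1..n}. necklace_of n \<B> i \<noteq> cyc k n i})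
           {\<B>. positroid n k \<B> \<and> sparse_paving {1..n} k \<B>}
           {A. A \<subseteq> {1..n} \<and> nonadjacent n A}"
proof -
  let ?support = "\<lambda>\<B>. {i\<in>{1..n}. necklace_of n \<B> i \<noteq> cyc k n i}"
  let ?bases = "\<lambda>A. uniform_minus {1..n} k (cyc k n ` A)"
  let ?N = "{A. A \<subseteq> {1..n} \<and> nonadjacent n A}"
  have "{\<B>. positroid n k \<B> \<and> sparse_paving {1..n} k \<B>} = ?bases ` ?N"
    using sparse_paving_positroid_iff[OF assms] by blast
  moreover have "?support (?bases A) = A" if "A \<in> ?N" for A
    using necklace_support_uniform_minus_cyc[OF assms] that by blast
  then have "bij_betw ?support (?bases ` ?N) ?N"
    by (intro bij_betw_byWitness[where f' = ?bases]) auto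
  ultimately show ?thesis
    by simp
qed

end
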